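(* Let $M\ge1$, let $(\tau,R)$ be an $M$-layer medium, let $\mathsf{p}\in\mathsf{S}_M$, and set $(k,b)=(\kappa(\mathsf{p}),\beta(\mathsf{p}))$. Then \[ w(\mathsf{p})=(-R)^{\tilde{k}-b}R^{k-b}T^{2b}. \]
   Context: Fix depths $z_{-1}<z_0<\cdots<z_M$ and reals $R=(R_0,\ldots,R_M)$ with $-1<R_n<1$ (the travel times $\tau$ play no role); $T_n=\sqrt{1-R_n^2}$, $T=(T_0,\ldots,T_M)$. A (reflection) scattering sequence is a finite sequence $\mathsf{p}=(\mathsf{p}_0,\ldots,\mathsf{p}_L)$ with $L\geq 2$, $\mathsf{p}_0=\mathsf{p}_L=z_{-1}$, $\mathsf{p}_i\in\{z_0,\ldots,z_M\}$ for $1\le i\le L-1$, and for every $0\le i\le L-1$ there is $-1\le j\le M-1$ with $\{\mathsf{p}_i,\mathsf{p}_{i+1}\}=\{z_j,z_{j+1}\}$; $\mathsf{S}_M$ is the set of these. The weight is $w(\mathsf{p})=\prod_{i=1}^{L-1}w_i$ where, if $\mathsf{p}_i=z_j$: $w_i=R_j$ if $\mathsf{p}_{i-1}=\mathsf{p}_{i+1}=z_{j-1}$; $w_i=-R_j$ if $\mathsf{p}_{i-1}=\mathsf{p}_{i+1}=z_{j+1}$; $w_i=T_j$ otherwise. For $0\le n\le M$, $k_n$ is the number of maximal runs of consecutive indices $i$ with $\mathsf{p}_i\in\{z_n,\ldots,z_M\}$, and $b_n$ the number of those runs of length at least 2; $\kappa(\mathsf{p})=(k_0,\ldots,k_M)$,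 $\beta(\mathsf{p})=(b_0,\ldots,b_M)$. Notation: $\tilde{k}=(k_1,\ldots,k_M,0)$; vector arithmetic entrywise; $s^d=\prod_{n=0}^M s_n^{d_n}$ with $0^0=1$. *)

theory Defs
  imports Complex_Main
begin

(* Depth z_j is represented by its index j :: int, -1 <= j <= M (the depths are
   strictly increasing, so p_i = z_j determines j uniquely). *)

definition scat_seq :: "nat \<Rightarrow> int list \<Rightarrow> bool" where
  "scat_seq M p \<longleftrightarrow>
     (let L = length p - 1 in
       length p \<ge> 3 \<and> p ! 0 = -1 \<and> p ! L = -1 \<and>
       (\<forall>i. 1 \<le> i \<and> i \<le> L - 1 \<longrightarrow> 0 \<le> p ! i \<and> p ! i \<le> int M) \<and>
       (\<forall>i < L. \<exists>j::int. -1 \<le> j \<and> j \<le> int M - 1 \<and>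
                  {p ! i, p ! (i+1)} = {j, j+1}))"

definition trans_coeff :: "(nat \<Rightarrow> real) \<Rightarrow> nat \<Rightarrow> real" where
  "trans_coeff R n = sqrt (1 - (R n)\<^sup>2)"

definition local_weight :: "(nat \<Rightarrow> real) \<Rightarrow> int list \<Rightarrow> nat \<Rightarrow> real" where
  "local_weight R p i =
     (let j = p ! i in
       if p ! (i-1) = j - 1 \<and> p ! (i+1) = j - 1 then R (nat j)
       else if p ! (i-1) = j + 1 \<and> p ! (i+1) = j + 1 then - R (nat j)
       else trans_coeff R (nat j))"

definition weight :: "(nat \<Rightarrow> real) \<Rightarrow> int list \<Rightarrow> real" where
  "weight R p = (\<Prod>i\<in>{1..length p - 2}. local_weight R p i)"

definition runs :: "int list \<Rightarrow> nat \<Rightarrow> (nat \<times> nat) set" where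
  "runs p n = {(a, b). a \<le> b \<and> b \<le> length p - 1 \<and>
        (\<forall>i. a \<le> i \<and> i \<le> b \<longrightarrow> p ! i \<ge> int n) \<and>
        (a = 0 \<or> p ! (a - 1) < int n) \<and>
        (b = length p - 1 \<or> p ! (b + 1) < int n)}"

definition kappa :: "int list \<Rightarrow> nat \<Rightarrow> nat" where
  "kappa p n = card (runs p n)"

definition beta :: "int list \<Rightarrow> nat \<Rightarrow> nat" where
  "beta p n = card {(a, b) \<in> runs p n. b - a + 1 \<ge> 2}"

definition kappa_tilde :: "nat \<Rightarrow> int list \<Rightarrow> nat \<Rightarrow> nat" where
  "kappa_tilde M p n = (if n < M then kappa p (n+1) else 0)"

end

theory Submission
  imports Defs
begin

text \<open>Each interior position of a scattering sequence at level \<open>n\<close> is a peak (weight \<open>R\<^sub>n\<close>),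
  a valley (weight \<open>-R\<^sub>n\<close>), or an up or down crossing (weight \<open>T\<^sub>n\<close>). The maximal runs at
  level \<open>\<ge> n\<close> start exactly at peaks and up crossings of level \<open>n\<close>, and the runs of length at
  least two start at the up crossings and end at the down crossings. Likewise the runs at
  level \<open>\<ge> n+1\<close> start right after the valleys and up crossings of level \<open>n\<close>. Grouping the
  product of local weights by level gives the formula.\<close>

subsection \<open>Maximal runs above a threshold\<close>

definition run_starts :: "int list \<Rightarrow> nat \<Rightarrow> nat set" where
  "run_starts p m = {a. a \<le> length p - 1 \<and> int m \<le> p ! a \<and> (a = 0 \<or> p ! (a - 1) < int m)}"

definition run_ends :: "int list \<Rightarrow> nat \<Rightarrow> nat set" where
  "run_ends p m =
     {b. b \<le> length p - 1 \<and> int m \<le> p ! b \<and> (b = length p - 1 \<or> p ! (b + 1) < int m)}"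

lemma run_above:
  assumes "(a, b) \<in> runs p m" "a \<le> k" "k \<le> b"
  shows "int m \<le> p ! k"
  using assms unfolding runs_def by blast

lemma runs_overlap_le:
  assumes r: "(a, b) \<in> runs p m" and r': "(a', b') \<in> runs p m"
    and "a \<le> i" "i \<le> b" "a' \<le> i" "i \<le> b'"
  shows "a' \<le> a \<and> b' \<le> b"
proof
  show "a' \<le> a"
  proof (rule ccontr)
    assume "\<not> a' \<le> a"
    then have "a' \<noteq> 0" and "int m \<le> p ! (a' - 1)" using assms by (auto intro: run_above[OF r])
    then show False using r' unfolding runs_def by auto
  qed
  show "b' \<le> b"
  proof (rule ccontr)
    assume "\<not> b' \<le> b"
    then have "b \<noteq> length p - 1" and "int m \<le> p ! (b + 1)"
      using assms r' unfolding runs_def by (auto intro: run_above[OF r'])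
    then show False using r unfolding runs_def by auto
  qed
qed

lemma runs_overlap_eq:
  assumes "(a, b) \<in> runs p m" "(a', b') \<in> runs p m" "a \<le> i" "i \<le> b" "a' \<le> i" "i \<le> b'"
  shows "a = a' \<and> b = b'"
  using runs_overlap_le[OF assms] runs_overlap_le[OF assms(2,1,5,6,3,4)] by auto

lemma run_left_end_exists:
  assumes "int m \<le> p ! i"
  shows "\<exists>a \<le> i. (\<forall>k. a \<le> k \<and> k \<le> i \<longrightarrow> int m \<le> p ! k) \<and> (a = 0 \<or> p ! (a - 1) < int m)"
  using assms
proof (induction i)
  case 0
  then show ?case by auto
next
  case (Suc i)
  show ?case
  proof (cases "int m \<le> p ! i")
    case True
    then obtain a where a: "a \<le> i" "\<forall>k. a \<le> k \<and> k \<le> i \<longrightarrow> int m \<le> p ! k"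
      "a = 0 \<or> p ! (a - 1) < int m" using Suc.IH by blast
    have "\<forall>k. a \<le> k \<and> k \<le> Suc i \<longrightarrow> int m \<le> p ! k"
      using a(2) Suc.prems by (metis le_SucE)
    then show ?thesis using a by (intro exI[of _ a]) auto
  next
    case False
    then show ?thesis using Suc.prems by (intro exI[of _ "Suc i"]) (auto simp: le_antisym)
  qed
qed

lemma run_right_end_exists:
  assumes "i \<le> length p - 1" "int m \<le> p ! i"
  shows "\<exists>b \<ge> i. b \<le> length p - 1 \<and> (\<forall>k. i \<le> k \<and> k \<le> b \<longrightarrow> int m \<le> p ! k)
           \<and> (b = length p - 1 \<or> p ! (b + 1) < int m)"
  using assms(1,2)
proof (induction i rule: inc_induct)
  case base
  then show ?case by (intro exI[of _ "length p - 1"]) (auto simp: le_antisym)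
next
  case (step i)
  show ?case
  proof (cases "int m \<le> p ! Suc i")
    case True
    then obtain b where b: "Suc i \<le> b" "b \<le> length p - 1"
      "\<forall>k. Suc i \<le> k \<and> k \<le> b \<longrightarrow> int m \<le> p ! k" "b = length p - 1 \<or> p ! (b + 1) < int m"
      using step.IH by blast
    have "\<forall>k. i \<le> k \<and> k \<le> b \<longrightarrow> int m \<le> p ! k"
      using b(3) step.prems by (metis Suc_le_eq le_neq_implies_less)
    then show ?thesis using b by (intro exI[of _ b]) auto
  next
    case False
    then show ?thesis using step by (intro exI[of _ i]) (auto simp: le_antisym)
  qed
qed

lemma run_through:
  assumes "i \<le> length p - 1" "int m \<le> p ! i"
  obtains a b where "(a, b) \<in> runs p m" "a \<le> i" "i \<le> b"
proof -
  obtain a where "a \<le> i" "\<forall>k. a \<le> k \<and> k \<le> i \<longrightarrow> int m \<le> p ! k" "a = 0 \<or> p ! (a - 1) < int m"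
    using run_left_end_exists[OF assms(2)] by blast
  moreover obtain b where "i \<le> b" "b \<le> length p - 1" "\<forall>k. i \<le> k \<and> k \<le> b \<longrightarrow> int m \<le> p ! k"
    "b = length p - 1 \<or> p ! (b + 1) < int m"
    using run_right_end_exists[OF assms] by blast
  moreover have "\<forall>k. a \<le> k \<and> k \<le> b \<longrightarrow> int m \<le> p ! k"
    using calculation by (meson nat_le_linear)
  ultimately have "(a, b) \<in> runs p m" unfolding runs_def by auto
  then show thesis using that \<open>a \<le> i\<close> \<open>i \<le> b\<close> by blast
qed

lemma run_start_end_mem:
  assumes "(a, b) \<in> runs p m"
  shows "a \<in> run_starts p m" "b \<in> run_ends p m"
  using assms unfolding runs_def run_starts_def run_ends_def by auto

lemma bij_betw_fst_runs: "bij_betw fst (runs p m) (run_starts p m)"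
  unfolding bij_betw_def
proof
  show "inj_on fst (runs p m)"
  proof (rule inj_onI)
    fix r r' assume "r \<in> runs p m" "r' \<in> runs p m" "fst r = fst r'"
    then show "r = r'"
      using runs_overlap_eq[of "fst r" "snd r" p m "fst r'" "snd r'" "fst r"]
      unfolding runs_def by (auto simp: prod_eq_iff)
  qed
  show "fst ` runs p m = run_starts p m"
  proof
    show "fst ` runs p m \<subseteq> run_starts p m" using run_start_end_mem by force
    show "run_starts p m \<subseteq> fst ` runs p m"
    proof
      fix a assume a: "a \<in> run_starts p m"
      then have "a \<le> length p - 1" "int m \<le> p ! a" unfolding run_starts_def by auto
      then obtain a' b where r: "(a', b) \<in> runs p m" "a' \<le> a" "a \<le> b" by (rule run_through)
      have "a' = a"
      proof (rule ccontr)
        assume "a' \<noteq> a"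
        then have "a \<noteq> 0" "int m \<le> p ! (a - 1)" using r by (auto intro: run_above[OF r(1)])
        then show False using a unfolding run_starts_def by auto
      qed
      then show "a \<in> fst ` runs p m" using r by force
    qed
  qed
qed

lemma bij_betw_snd_runs: "bij_betw snd (runs p m) (run_ends p m)"
  unfolding bij_betw_def
proof
  show "inj_on snd (runs p m)"
  proof (rule inj_onI)
    fix r r' assume "r \<in> runs p m" "r' \<in> runs p m" "snd r = snd r'"
    then show "r = r'"
      using runs_overlap_eq[of "fst r" "snd r" p m "fst r'" "snd r'" "snd r"]
      unfolding runs_def by (auto simp: prod_eq_iff)
  qed
  show "snd ` runs p m = run_ends p m"
  proof
    show "snd ` runs p m \<subseteq> run_ends p m" using run_start_end_mem by force
    show "run_ends p m \<subseteq> snd ` runs p m"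
    proof
      fix b assume b: "b \<in> run_ends p m"
      then have "b \<le> length p - 1" "int m \<le> p ! b" unfolding run_ends_def by auto
      then obtain a b' where r: "(a, b') \<in> runs p m" "a \<le> b" "b \<le> b'" by (rule run_through)
      have "b' = b"
      proof (rule ccontr)
        assume "b' \<noteq> b"
        then have "b \<noteq> length p - 1" "int m \<le> p ! (b + 1)"
          using r runs_def by (auto intro: run_above[OF r(1)])
        then show False using b unfolding run_ends_def by auto
      qed
      then show "b \<in> snd ` runs p m" using r by force
    qed
  qed
qed

lemma kappa_eq_card_run_starts: "kappa p m = card (run_starts p m)"
  unfolding kappa_def using bij_betw_fst_runs by (rule bij_betw_same_card)

lemma long_run_iff_start:
  assumes r: "(a, b) \<in> runs p m"
  shows "a < b \<longleftrightarrow> a < length p - 1 \<and> int m \<le> p ! (a + 1)"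
proof -
  have "a \<le> b" "b \<le> length p - 1" "b = length p - 1 \<or> p ! (b + 1) < int m"
    using r unfolding runs_def by auto
  then show ?thesis using run_above[OF r, of "a + 1"] by (cases "a = b") auto
qed

lemma long_run_iff_end:
  assumes r: "(a, b) \<in> runs p m"
  shows "a < b \<longleftrightarrow> 0 < b \<and> int m \<le> p ! (b - 1)"
proof -
  have "a \<le> b" "a = 0 \<or> p ! (a - 1) < int m"
    using r unfolding runs_def by auto
  then show ?thesis using run_above[OF r, of "b - 1"] by (cases "a = b") auto
qed

lemma card_long_runs: "beta p m = card {r \<in> runs p m. fst r < snd r}"
  unfolding beta_def by (rule arg_cong[where f = card]) auto

lemma beta_eq_card_long_run_starts:
  "beta p m = card {a \<in> run_starts p m. a < length p - 1 \<and> int m \<le> p ! (a + 1)}"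
proof -
  let ?L = "{r \<in> runs p m. fst r < snd r}"
  have "inj_on fst ?L"
    using bij_betw_imp_inj_on[OF bij_betw_fst_runs] by (rule inj_on_subset) auto
  then have "beta p m = card (fst ` ?L)" unfolding card_long_runs by (simp add: card_image)
  also have "fst ` ?L = {a \<in> run_starts p m. a < length p - 1 \<and> int m \<le> p ! (a + 1)}"
  proof (intro equalityI subsetI)
    fix a assume "a \<in> fst ` ?L"
    then obtain b where "(a, b) \<in> runs p m" "a < b" by auto
    then show "a \<in> {a \<in> run_starts p m. a < length p - 1 \<and> int m \<le> p ! (a + 1)}"
      using long_run_iff_start run_start_end_mem by blast
  next
    fix a assume a: "a \<in> {a \<in> run_starts p m. a < length p - 1 \<and> int m \<le> p ! (a + 1)}"
    then have "a \<in> fst ` runs p m" using bij_betw_imp_surj_on[OF bij_betw_fst_runs] by blast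
    then obtain b where r: "(a, b) \<in> runs p m" by force
    then have "a < b" using a long_run_iff_start by blast
    then show "a \<in> fst ` ?L" using r by force
  qed
  finally show ?thesis .
qed

lemma beta_eq_card_long_run_ends:
  "beta p m = card {b \<in> run_ends p m. 0 < b \<and> int m \<le> p ! (b - 1)}"
proof -
  let ?L = "{r \<in> runs p m. fst r < snd r}"
  have "inj_on snd ?L"
    using bij_betw_imp_inj_on[OF bij_betw_snd_runs] by (rule inj_on_subset) auto
  then have "beta p m = card (snd ` ?L)" unfolding card_long_runs by (simp add: card_image)
  also have "snd ` ?L = {b \<in> run_ends p m. 0 < b \<and> int m \<le> p ! (b - 1)}"
  proof (intro equalityI subsetI)
    fix b assume "b \<in> snd ` ?L"
    then obtain a where "(a, b) \<in> runs p m" "a < b" by auto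
    then show "b \<in> {b \<in> run_ends p m. 0 < b \<and> int m \<le> p ! (b - 1)}"
      using long_run_iff_end run_start_end_mem by blast
  next
    fix b assume b: "b \<in> {b \<in> run_ends p m. 0 < b \<and> int m \<le> p ! (b - 1)}"
    then have "b \<in> snd ` runs p m" using bij_betw_imp_surj_on[OF bij_betw_snd_runs] by blast
    then obtain a where r: "(a, b) \<in> runs p m" by force
    then have "a < b" using b long_run_iff_end by blast
    then show "b \<in> snd ` ?L" using r by force
  qed
  finally show ?thesis .
qed

subsection \<open>Local shape of a scattering sequence\<close>

definition interior_positions :: "int list \<Rightarrow> nat set" where
  "interior_positions p = {1..length p - 2}"

definition peaks :: "int list \<Rightarrow> nat \<Rightarrow> nat set" where
  "peaks p n = {i \<in> interior_positions p.
     p ! (i - 1) = int n - 1 \<and> p ! i = int n \<and> p ! (i + 1) = int n - 1}"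

definition valleys :: "int list \<Rightarrow> nat \<Rightarrow> nat set" where
  "valleys p n = {i \<in> interior_positions p.
     p ! (i - 1) = int n + 1 \<and> p ! i = int n \<and> p ! (i + 1) = int n + 1}"

definition up_crossings :: "int list \<Rightarrow> nat \<Rightarrow> nat set" where
  "up_crossings p n = {i \<in> interior_positions p.
     p ! (i - 1) = int n - 1 \<and> p ! i = int n \<and> p ! (i + 1) = int n + 1}"

definition down_crossings :: "int list \<Rightarrow> nat \<Rightarrow> nat set" where
  "down_crossings p n = {i \<in> interior_positions p.
     p ! (i - 1) = int n + 1 \<and> p ! i = int n \<and> p ! (i + 1) = int n - 1}"

lemma finite_level_sets:
  "finite (peaks p n)" "finite (valleys p n)" "finite (up_crossings p n)" "finite (down_crossings p n)"
  unfolding peaks_def valleys_def up_crossings_def down_crossings_def interior_positions_def by auto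

context
  fixes M :: nat and p :: "int list"
  assumes scat: "scat_seq M p"
begin

lemma scat_length: "3 \<le> length p"
  and scat_first: "p ! 0 = -1"
  and scat_last: "p ! (length p - 1) = -1"
  using scat unfolding scat_seq_def Let_def by auto

lemma scat_interior_bounds: "i \<in> interior_positions p \<Longrightarrow> 0 \<le> p ! i \<and> p ! i \<le> int M"
  using scat unfolding scat_seq_def Let_def interior_positions_def by (auto simp: diff_diff_left)

lemma scat_step: "i < length p - 1 \<Longrightarrow> p ! (i + 1) = p ! i + 1 \<or> p ! (i + 1) = p ! i - 1"
proof -
  assume "i < length p - 1"
  then obtain j where "{p ! i, p ! (i + 1)} = {j, j + 1}"
    using scat unfolding scat_seq_def Let_def by blast
  then show ?thesis by (auto simp: doubleton_eq_iff)
qed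

lemma scat_neighbours:
  assumes "i \<in> interior_positions p"
  shows "p ! (i - 1) = p ! i + 1 \<or> p ! (i - 1) = p ! i - 1"
    and "p ! (i + 1) = p ! i + 1 \<or> p ! (i + 1) = p ! i - 1"
proof -
  have i: "1 \<le> i" "i < length p - 1" using assms scat_length unfolding interior_positions_def by auto
  then show "p ! (i - 1) = p ! i + 1 \<or> p ! (i - 1) = p ! i - 1"
    using scat_step[of "i - 1"] by auto
  show "p ! (i + 1) = p ! i + 1 \<or> p ! (i + 1) = p ! i - 1" using scat_step i by blast
qed

lemma scat_nonneg_interior:
  assumes "i \<le> length p - 1" "0 \<le> p ! i"
  shows "i \<in> interior_positions p"
proof -
  have "p ! i \<noteq> -1" using assms(2) by simp
  then have "i \<noteq> 0" "i \<noteq> length p - 1" using scat_first scat_last by metis+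
  then show ?thesis using assms unfolding interior_positions_def by auto
qed

lemma scat_run_starts:
  "run_starts p m = {a \<in> interior_positions p. p ! (a - 1) = int m - 1 \<and> p ! a = int m}"
proof (intro equalityI subsetI)
  fix a assume a: "a \<in> run_starts p m"
  then have "a \<in> interior_positions p" using scat_nonneg_interior unfolding run_starts_def by auto
  moreover have "p ! (a - 1) < int m" "int m \<le> p ! a"
    using a calculation unfolding run_starts_def interior_positions_def by auto
  ultimately show "a \<in> {a \<in> interior_positions p. p ! (a - 1) = int m - 1 \<and> p ! a = int m}"
    using scat_neighbours(1) by fastforce
next
  fix a assume "a \<in> {a \<in> interior_positions p. p ! (a - 1) = int m - 1 \<and> p ! a = int m}"
  then show "a \<in> run_starts p m" unfolding run_starts_def interior_positions_def by auto
qed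

lemma scat_run_ends:
  "run_ends p m = {b \<in> interior_positions p. p ! b = int m \<and> p ! (b + 1) = int m - 1}"
proof (intro equalityI subsetI)
  fix b assume b: "b \<in> run_ends p m"
  then have "b \<in> interior_positions p" using scat_nonneg_interior unfolding run_ends_def by auto
  moreover have "p ! (b + 1) < int m" "int m \<le> p ! b"
    using b calculation unfolding run_ends_def interior_positions_def by auto
  ultimately show "b \<in> {b \<in> interior_positions p. p ! b = int m \<and> p ! (b + 1) = int m - 1}"
    using scat_neighbours(2) by fastforce
next
  fix b assume "b \<in> {b \<in> interior_positions p. p ! b = int m \<and> p ! (b + 1) = int m - 1}"
  then show "b \<in> run_ends p m" unfolding run_ends_def interior_positions_def by auto
qed

lemma scat_kappa: "kappa p n = card (up_crossings p n) + card (peaks p n)"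
proof -
  have "run_starts p n = up_crossings p n \<union> peaks p n"
    unfolding scat_run_starts up_crossings_def peaks_def by (auto dest: scat_neighbours(2))
  moreover have "up_crossings p n \<inter> peaks p n = {}" unfolding up_crossings_def peaks_def by auto
  ultimately show ?thesis
    unfolding kappa_eq_card_run_starts using finite_level_sets by (simp add: card_Un_disjoint)
qed

lemma scat_beta_up_crossings: "beta p n = card (up_crossings p n)"
proof -
  have "{a \<in> run_starts p n. a < length p - 1 \<and> int n \<le> p ! (a + 1)} = up_crossings p n"
  proof (intro equalityI subsetI)
    fix a assume "a \<in> {a \<in> run_starts p n. a < length p - 1 \<and> int n \<le> p ! (a + 1)}"
    then show "a \<in> up_crossings p n"
      using scat_neighbours(2)[of a] unfolding scat_run_starts up_crossings_def by auto
  qed (auto simp: scat_run_starts up_crossings_def interior_positions_def)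
  then show ?thesis using beta_eq_card_long_run_starts by simp
qed

lemma scat_beta_down_crossings: "beta p n = card (down_crossings p n)"
proof -
  have "{b \<in> run_ends p n. 0 < b \<and> int n \<le> p ! (b - 1)} = down_crossings p n"
  proof (intro equalityI subsetI)
    fix b assume "b \<in> {b \<in> run_ends p n. 0 < b \<and> int n \<le> p ! (b - 1)}"
    then show "b \<in> down_crossings p n"
      using scat_neighbours(1)[of b] unfolding scat_run_ends down_crossings_def by auto
  qed (auto simp: scat_run_ends down_crossings_def interior_positions_def)
  then show ?thesis using beta_eq_card_long_run_ends by simp
qed

lemma scat_run_starts_Suc: "run_starts p (Suc n) = Suc ` (valleys p n \<union> up_crossings p n)"
proof (intro equalityI subsetI)
  fix a assume "a \<in> run_starts p (Suc n)"
  then have a: "a \<in> interior_positions p" "p ! (a - 1) = int n" "p ! a = int n + 1"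
    unfolding scat_run_starts by auto
  then have "a - 1 \<in> interior_positions p" "Suc (a - 1) = a"
    using scat_nonneg_interior[of "a - 1"] unfolding interior_positions_def by auto
  then have "a - 1 \<in> valleys p n \<union> up_crossings p n"
    using a scat_neighbours(1)[of "a - 1"] unfolding valleys_def up_crossings_def by auto
  then show "a \<in> Suc ` (valleys p n \<union> up_crossings p n)" using \<open>Suc (a - 1) = a\<close> by force
next
  fix a assume "a \<in> Suc ` (valleys p n \<union> up_crossings p n)"
  then obtain i where i: "a = Suc i" "i \<in> interior_positions p" "p ! i = int n" "p ! (i + 1) = int n + 1"
    unfolding valleys_def up_crossings_def by auto
  then have "Suc i \<in> interior_positions p"
    using scat_nonneg_interior[of "Suc i"] unfolding interior_positions_def by auto
  then show "a \<in> run_starts p (Suc n)" unfolding scat_run_starts using i by auto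
qed

lemma scat_no_step_above_top:
  assumes "i \<in> interior_positions p" "p ! i = int M"
  shows "p ! (i + 1) \<noteq> int M + 1"
proof
  assume up: "p ! (i + 1) = int M + 1"
  then have "i + 1 \<in> interior_positions p"
    using assms(1) scat_nonneg_interior[of "i + 1"] unfolding interior_positions_def by auto
  then show False using up scat_interior_bounds by fastforce
qed

lemma scat_kappa_tilde:
  assumes "n \<le> M"
  shows "kappa_tilde M p n = card (valleys p n) + card (up_crossings p n)"
proof (cases "n < M")
  case True
  have "valleys p n \<inter> up_crossings p n = {}" unfolding valleys_def up_crossings_def by auto
  then have "card (valleys p n \<union> up_crossings p n) = card (valleys p n) + card (up_crossings p n)"
    using finite_level_sets by (simp add: card_Un_disjoint)
  then show ?thesis
    using True unfolding kappa_tilde_def kappa_eq_card_run_starts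
    by (simp add: scat_run_starts_Suc card_image)
next
  case False
  then have "n = M" using assms by simp
  then have "valleys p n = {}" "up_crossings p n = {}"
    using scat_no_step_above_top unfolding valleys_def up_crossings_def by auto
  then show ?thesis using \<open>n = M\<close> unfolding kappa_tilde_def by simp
qed

lemma scat_level_positions:
  "{i \<in> interior_positions p. nat (p ! i) = n}
     = peaks p n \<union> valleys p n \<union> (up_crossings p n \<union> down_crossings p n)"
proof (intro equalityI subsetI)
  fix i assume "i \<in> {i \<in> interior_positions p. nat (p ! i) = n}"
  then have "i \<in> interior_positions p" "p ! i = int n" using scat_interior_bounds by auto
  then show "i \<in> peaks p n \<union> valleys p n \<union> (up_crossings p n \<union> down_crossings p n)"
    using scat_neighbours[of i] unfolding peaks_def valleys_def up_crossings_def down_crossings_def by auto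
qed (auto simp: peaks_def valleys_def up_crossings_def down_crossings_def)

lemma scat_prod_local_weight_level:
  "(\<Prod>i \<in> {i \<in> interior_positions p. nat (p ! i) = n}. local_weight R p i)
     = R n ^ card (peaks p n) * (- R n) ^ card (valleys p n)
       * trans_coeff R n ^ (card (up_crossings p n) + card (down_crossings p n))"
proof -
  have disjoint: "(peaks p n \<union> valleys p n) \<inter> (up_crossings p n \<union> down_crossings p n) = {}"
    "peaks p n \<inter> valleys p n = {}" "up_crossings p n \<inter> down_crossings p n = {}"
    unfolding peaks_def valleys_def up_crossings_def down_crossings_def by auto
  have "(\<Prod>i \<in> {i \<in> interior_positions p. nat (p ! i) = n}. local_weight R p i)
      = (\<Prod>i \<in> peaks p n. local_weight R p i) * (\<Prod>i \<in> valleys p n. local_weight R p i)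
        * ((\<Prod>i \<in> up_crossings p n. local_weight R p i)
           * (\<Prod>i \<in> down_crossings p n. local_weight R p i))"
    unfolding scat_level_positions using disjoint finite_level_sets by (simp add: prod.union_disjoint)
  also have "\<dots> = R n ^ card (peaks p n) * (- R n) ^ card (valleys p n)
      * (trans_coeff R n ^ card (up_crossings p n) * trans_coeff R n ^ card (down_crossings p n))"
    unfolding peaks_def valleys_def up_crossings_def down_crossings_def local_weight_def Let_def
    by simp
  finally show ?thesis by (simp add: power_add)
qed

end

theorem lemma1:
  fixes M :: nat and R :: "nat \<Rightarrow> real" and p :: "int list"
  assumes "M \<ge> 1"
    and "\<And>n. n \<le> M \<Longrightarrow> -1 < R n \<and> R n < 1"
    and "scat_seq M p"
  shows "weight R p =
    (\<Prod>n\<in>{0..M}.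
        (- R n) powi (int (kappa_tilde M p n) - int (beta p n))
      * (R n) powi (int (kappa p n) - int (beta p n))
      * (trans_coeff R n) ^ (2 * beta p n))"
proof -
  \<comment> \<open>The identity is purely combinatorial.\<close>
  note scat = \<open>scat_seq M p\<close>
  have "weight R p = (\<Prod>i \<in> interior_positions p. local_weight R p i)"
    unfolding weight_def interior_positions_def ..
  also have "\<dots> = (\<Prod>n\<in>{0..M}. \<Prod>i \<in> {i \<in> interior_positions p. nat (p ! i) = n}. local_weight R p i)"
    using scat_interior_bounds[OF scat]
    by (intro prod.group[symmetric]) (force simp: interior_positions_def)+
  also have "\<dots> = (\<Prod>n\<in>{0..M}.
        (- R n) powi (int (kappa_tilde M p n) - int (beta p n))
      * (R n) powi (int (kappa p n) - int (beta p n))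
      * (trans_coeff R n) ^ (2 * beta p n))"
  proof (rule prod.cong[OF refl])
    fix n assume "n \<in> {0..M}"
    then have "int (kappa_tilde M p n) - int (beta p n) = int (card (valleys p n))"
      using scat_kappa_tilde[OF scat] scat_beta_up_crossings[OF scat] by simp
    moreover have "int (kappa p n) - int (beta p n) = int (card (peaks p n))"
      using scat_kappa[OF scat] scat_beta_up_crossings[OF scat] by simp
    moreover have "card (up_crossings p n) + card (down_crossings p n) = 2 * beta p n"
      using scat_beta_up_crossings[OF scat] scat_beta_down_crossings[OF scat] by simp
    ultimately show "(\<Prod>i \<in> {i \<in> interior_positions p. nat (p ! i) = n}. local_weight R p i) =
        (- R n) powi (int (kappa_tilde M p n) - int (beta p n))
      * (R n) powi (int (kappa p n) - int (beta p n))
      * (trans_coeff R n) ^ (2 * beta p n)"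
      using scat_prod_local_weight_level[OF scat, of R n] by (simp add: mult_ac)
  qed
  finally show ?thesis .
qed

end
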